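(* Let $q$ be odd and $c\in{\mathbb F}_q$. Then $$\prod\{c-a: a\in\mathcal B_2^{--}\}=\begin{cases}2&c=2,\\ \left(\frac2q\right)2 & c=-2,\\ \sqrt{c+2}& c\in\mathcal B_2^{-+},\\ -\left(\frac2q\right)\sqrt{2-c}& c\in\mathcal B_2^{+-},\\ 2 & c\in\mathcal B_2^{++}\text{ and }\sqrt{c+2}\in\mathcal B_2^{++},\\ -2& c\in\mathcal B_2^{++}\text{ and }\sqrt{c+2}\notin\mathcal B_2^{++},\\ 0& c\in\mathcal B_2^{--},\end{cases}$$ where in the third case $\sqrt{c+2}$ is chosen so that $\sqrt{c+2}+2$ is a square, and in the fourth case $\sqrt{2-c}$ is chosen so that $\sqrt{2-c}+2$ is a nonsquare. Moreover, if $c\in\mathcal B_2^{++}$ then the two square roots $\pm\sqrt{c+2}$ either both lie in $\mathcal B_2^{++}$ or both lie in $\mathcal B_2^{--}$.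
   Context: $\left(\frac{a}{q}\right)$ is the Legendre symbol on ${\mathbb F}_q$. For $\varepsilon_1,\varepsilon_2\in\{1,-1\}$ (written $+,-$), $\mathcal B_2^{\varepsilon_1,\varepsilon_2}=\{b\in{\mathbb F}_q:\left(\frac{2-b}{q}\right)=\varepsilon_1,\ \left(\frac{2+b}{q}\right)=\varepsilon_2\}$. Note ${\mathbb F}_q=\{2,-2\}\sqcup\bigsqcup_{\varepsilon_1,\varepsilon_2}\mathcal B_2^{\varepsilon_1,\varepsilon_2}$. *)

theory Defs
  imports Main
begin

definition legendreF :: "'a::{field,finite} \<Rightarrow> int" where
  "legendreF a = (if a = 0 then 0 else if (\<exists>y. y ^ 2 = a) then 1 else -1)"

definition B2 :: "int \<Rightarrow> int \<Rightarrow> 'a::{field,finite} set" where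
  "B2 e1 e2 = {b. legendreF (2 - b) = e1 \<and> legendreF (2 + b) = e2}"

end

theory Submission
  imports Defs "HOL-Computational_Algebra.Polynomial_Factorial" "HOL-Library.Cardinality"
begin

text \<open>Let q = 2m + 1, let \<chi> be the Legendre symbol and D the product of X^2 - 2 - a over
  a in B2 (-1) (-1). The heart of the proof is the polynomial identity
  2 D = (2 + X)^(m+1) + (2 - X)^(m+1). Write A and B for the sum and the difference of
  (2 + X)^(m+1) and (2 - X)^(m+1), and W = 4 - X^2. Since (2 \<plusminus> X)^q = 2 \<plusminus> X^q, one finds
  A B = 4 X (X^(2m) + 1), A dvd W^m + 1 and B dvd W (W^m - 1). On the other hand Y^m + 1 is the
  product of Y - u over the nonsquares u; shifting by 2, splitting according to \<chi>(2 - a) and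
  substituting Y = X^2 - 2 gives X^(2m) + 1 = D E with D dvd W^m + 1 and E dvd W^m - 1.
  As W^m + 1 and W^m - 1 are coprime, A and D divide each other, and comparing leading
  coefficients gives A = 2 D.

  Evaluating at s with s^2 = c + 2 and using Euler's criterion x^m = \<chi>(x) yields
  2 \<Prod>(c - a) = (2 + s) \<chi>(2 + s) + (2 - s) \<chi>(2 - s), where \<chi>(2 + s) \<chi>(2 - s) = \<chi>(2 - c).
  All cases follow from this, the one for B2 1 (-1) after replacing c by -c, which multiplies
  the product by \<chi>(2).\<close>

lemma finite_field_power_card_minus_one:
  fixes x :: "'a::{field,finite}"
  assumes "x \<noteq> 0"
  shows "x ^ (CARD('a) - 1) = 1"
proof -
  let ?U = "UNIV - {0::'a}"
  have "(\<Prod>y\<in>?U. x * y) = (\<Prod>y\<in>?U. y)"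
    by (rule prod.reindex_bij_witness[where i="\<lambda>y. y / x" and j="\<lambda>y. x * y"])
       (use assms in auto)
  moreover have "(\<Prod>y\<in>?U. x * y) = x ^ (CARD('a) - 1) * (\<Prod>y\<in>?U. y)"
    by (simp add: prod.distrib card_Diff_singleton)
  moreover have "(\<Prod>y\<in>?U. y) \<noteq> 0"
    by simp
  ultimately show ?thesis
    by simp
qed

lemma finite_field_power_card: "x ^ CARD('a) = (x :: 'a::{field,finite})"
proof (cases "x = 0")
  case False
  have "CARD('a) = Suc (CARD('a) - 1)"
    using finite_UNIV_card_ge_0[where 'a='a] by simp
  then show ?thesis
    using finite_field_power_card_minus_one[OF False] by (metis power_Suc mult_1_right)
qed (use finite_UNIV_card_ge_0[where 'a='a] in simp)

lemma card_finite_field_ge_two: "CARD('a::{field,finite}) \<ge> 2"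
  using card_mono[OF finite_class.finite_UNIV, of "{0::'a, 1}"] by simp

text \<open>Both sides agree as functions on the field, and their difference has degree below its size.\<close>
lemma finite_field_linear_power_card:
  fixes a b :: "'a::{field,finite}"
  shows "[:a, b:] ^ CARD('a) = [:a:] + monom b CARD('a)"
proof -
  define q where "q = CARD('a)"
  define R where "R = [:a, b:] ^ q - [:a:] - monom b q"
  have "degree ([:a, b:] ^ q) \<le> q"
    using degree_power_le[of "[:a, b:]" q] degree_pCons_le[of a "[:b:]"] by (simp add: order_trans)
  then have "coeff R i = 0" if "i \<ge> q" for i
    using that coeff_linear_poly_power[where i=q and n=q and a=a and b=b] finite_field_power_card[of b]
    by (cases "i = q") (auto simp: R_def q_def coeff_eq_0)
  moreover have "q \<ge> 2"
    unfolding q_def by (rule card_finite_field_ge_two)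
  ultimately have "degree R < q"
    by (intro degree_lessI) auto
  moreover have "poly R x = 0" for x
    using finite_field_power_card[of "a + b * x"] finite_field_power_card[of x]
    by (simp add: R_def q_def poly_monom algebra_simps)
  ultimately have "R = 0"
    by (intro poly_eqI_degree[where A = UNIV]) (auto simp: q_def)
  then show ?thesis
    by (simp add: R_def q_def algebra_simps)
qed

lemma of_nat_card_finite_field: "of_nat CARD('a) = (0 :: 'a::{field,finite})"
proof -
  have "coeff ([:1, 1:] ^ CARD('a)) 1 = (of_nat CARD('a) :: 'a)"
    using coeff_linear_poly_power[of 1 "CARD('a)" "1::'a" 1] card_finite_field_ge_two[where 'a='a]
    by simp
  then show ?thesis
    using card_finite_field_ge_two[where 'a='a] by (simp add: finite_field_linear_power_card)
qed

lemma two_neq_zero_if_odd_card: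
  assumes "odd CARD('a::{field,finite})"
  shows "(2::'a) \<noteq> 0"
proof
  assume "(2::'a) = 0"
  obtain r where "CARD('a) = 2 * r + 1"
    using assms oddE by blast
  then have "(of_nat CARD('a) :: 'a) = 2 * of_nat r + 1"
    by simp
  with \<open>(2::'a) = 0\<close> show False
    using of_nat_card_finite_field[where 'a='a] by simp
qed

lemma self_eq_neg_iff_if_odd_card:
  assumes "odd CARD('a::{field,finite})"
  shows "(x = -x) \<longleftrightarrow> x = (0::'a)"
proof -
  have "(x = -x) \<longleftrightarrow> 2 * x = 0"
    by (metis add_eq_0_iff mult_2)
  then show ?thesis
    using two_neq_zero_if_odd_card[OF assms] by simp
qed

lemma card_nonzero_squares:
  assumes "odd CARD('a::{field,finite})"
  shows "card {x::'a. x \<noteq> 0 \<and> (\<exists>y. y^2 = x)} = (CARD('a) - 1) div 2"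
proof -
  define S where "S = {x::'a. x \<noteq> 0 \<and> (\<exists>y. y^2 = x)}"
  have fibre: "card {y. y^2 = x} = 2" if "x \<in> S" for x
  proof -
    obtain z where "z \<noteq> 0" "x = z^2"
      using \<open>x \<in> S\<close> unfolding S_def by auto
    then have "{y. y^2 = x} = {z, -z}"
      by (auto simp: power2_eq_iff)
    moreover have "z \<noteq> -z"
      using \<open>z \<noteq> 0\<close> self_eq_neg_iff_if_odd_card[OF assms] by auto
    ultimately show ?thesis
      by simp
  qed
  have "UNIV - {0::'a} = (\<Union>x\<in>S. {y. y^2 = x})"
    unfolding S_def by auto
  then have "card (UNIV - {0::'a}) = (\<Sum>x\<in>S. card {y. y^2 = x})"
    by (simp only:) (rule card_UN_disjoint; auto)
  also have "\<dots> = 2 * card S"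
    using fibre by simp
  finally show ?thesis
    by (simp add: S_def card_Diff_singleton)
qed

lemma card_power_eq_le:
  fixes c :: "'a::idom"
  assumes "n > 0"
  shows "card {x. x ^ n = c} \<le> n"
proof -
  define p where "p = monom 1 n - [:c:]"
  have "coeff p n = 1"
    using assms by (cases n) (simp_all add: p_def)
  then have "card {x. poly p x = 0} \<le> degree p"
    by (intro card_poly_roots_bound) auto
  also have "degree p \<le> n"
    unfolding p_def by (intro degree_diff_le) (auto simp: degree_monom_le)
  finally show ?thesis
    by (simp add: p_def poly_monom)
qed

lemma half_card_pos: "odd CARD('a::{field,finite}) \<Longrightarrow> (CARD('a) - 1) div 2 > 0"
  using card_finite_field_ge_two[where 'a='a] by presburger

lemma power_half_card_cases:
  assumes "odd CARD('a::{field,finite})" "(x::'a) \<noteq> 0"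
  shows "x ^ ((CARD('a) - 1) div 2) = 1 \<or> x ^ ((CARD('a) - 1) div 2) = -1"
proof -
  have "(x ^ ((CARD('a) - 1) div 2))^2 = x ^ (CARD('a) - 1)"
    using assms(1) by (simp flip: power_mult)
  then show ?thesis
    using finite_field_power_card_minus_one[OF assms(2)] by (simp add: power2_eq_1_iff)
qed

lemma euler_criterion_finite_field:
  assumes "odd CARD('a::{field,finite})" "(x::'a) \<noteq> 0"
  shows "(\<exists>y. y^2 = x) \<longleftrightarrow> x ^ ((CARD('a) - 1) div 2) = 1"
proof -
  define m where "m = (CARD('a) - 1) div 2"
  define S where "S = {x::'a. x \<noteq> 0 \<and> (\<exists>y. y^2 = x)}"
  have "m > 0"
    unfolding m_def by (rule half_card_pos[OF assms(1)])
  have "S \<subseteq> {x. x ^ m = 1}"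
  proof
    fix x assume "x \<in> S"
    then obtain y where "y \<noteq> 0" "x = y^2"
      unfolding S_def by auto
    then show "x \<in> {x. x ^ m = 1}"
      using assms(1) finite_field_power_card_minus_one[of y] by (simp add: m_def flip: power_mult)
  qed
  moreover have "card {x::'a. x ^ m = 1} \<le> card S"
    using card_power_eq_le[OF \<open>m > 0\<close>] card_nonzero_squares[OF assms(1)] by (simp add: S_def m_def)
  ultimately have "S = {x. x ^ m = 1}"
    by (intro card_seteq) auto
  then show ?thesis
    using assms(2) by (auto simp: S_def m_def set_eq_iff)
qed

lemma legendreF_cases: "legendreF x \<in> {-1, 0, 1}"
  by (simp add: legendreF_def)

lemma of_int_legendreF:
  assumes "odd CARD('a::{field,finite})"
  shows "of_int (legendreF x) = (x::'a) ^ ((CARD('a) - 1) div 2)"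
proof (cases "x = 0")
  case True
  then show ?thesis
    using half_card_pos[OF assms] by (simp add: legendreF_def)
next
  case False
  then show ?thesis
    using euler_criterion_finite_field[OF assms False] power_half_card_cases[OF assms False]
    by (auto simp: legendreF_def)
qed

lemma of_int_eq_iff_on_signs:
  assumes "(2::'a::ring_1) \<noteq> 0" "a \<in> {-1, 0, 1}" "b \<in> {-1, 0, 1}"
  shows "(of_int a = (of_int b :: 'a)) \<longleftrightarrow> a = b"
proof -
  have "(1::'a) \<noteq> -1" "(1::'a) \<noteq> 0"
    using assms(1) by (auto simp: eq_neg_iff_add_eq_0 one_add_one)
  then show ?thesis
    using assms(2,3) by auto
qed

lemma legendreF_mult:
  assumes "odd CARD('a::{field,finite})"
  shows "legendreF (x * y) = legendreF x * legendreF (y::'a)"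
proof -
  have "of_int (legendreF (x * y)) = (of_int (legendreF x * legendreF y) :: 'a)"
    by (simp add: of_int_legendreF[OF assms] power_mult_distrib)
  moreover have "legendreF x * legendreF y \<in> {-1, 0, 1}"
    using legendreF_cases[of x] legendreF_cases[of y] by auto
  ultimately show ?thesis
    using of_int_eq_iff_on_signs[OF two_neq_zero_if_odd_card[OF assms] legendreF_cases] by blast
qed

lemma legendreF_square: "(y::'a::{field,finite}) \<noteq> 0 \<Longrightarrow> legendreF (y^2) = 1"
  by (auto simp: legendreF_def)

lemma exists_sqrt_if_legendreF_eq_1:
  "legendreF (x::'a::{field,finite}) = 1 \<Longrightarrow> \<exists>s. s^2 = x"
  by (auto simp: legendreF_def split: if_splits)

lemma card_nonsquares:
  assumes "odd CARD('a::{field,finite})"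
  shows "card {x::'a. legendreF x = -1} = (CARD('a) - 1) div 2"
proof -
  let ?Q = "{x::'a. x \<noteq> 0 \<and> (\<exists>y. y^2 = x)}" and ?N = "{x::'a. legendreF x = -1}"
  have U: "UNIV = insert 0 (?Q \<union> ?N)" and "0 \<notin> ?Q \<union> ?N" and "?Q \<inter> ?N = {}"
    by (auto simp: legendreF_def)
  have "CARD('a) = card (insert 0 (?Q \<union> ?N))"
    by (simp only: U[symmetric])
  also have "\<dots> = Suc (card (?Q \<union> ?N))"
    using \<open>0 \<notin> ?Q \<union> ?N\<close> by (intro card_insert_disjoint) auto
  also have "card (?Q \<union> ?N) = card ?Q + card ?N"
    using \<open>?Q \<inter> ?N = {}\<close> by (intro card_Un_disjoint) auto
  finally have "CARD('a) = Suc (card ?Q + card ?N)" .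
  moreover obtain r where "CARD('a) = 2 * r + 1"
    using assms oddE by blast
  ultimately show ?thesis
    using card_nonzero_squares[OF assms] by simp
qed

lemma prod_linear_shifted_nonsquares:
  assumes "odd CARD('a::{field,finite})"
  shows "(\<Prod>a\<in>{a. legendreF (c + a) = -1}. [:-a, 1:]) = [:c::'a, 1:] ^ ((CARD('a) - 1) div 2) + 1"
proof -
  define m where "m = (CARD('a) - 1) div 2"
  define N where "N = {a. legendreF (c + a) = -1}"
  have "m > 0"
    unfolding m_def by (rule half_card_pos[OF assms])
  have "N = (\<lambda>x. x - c) ` {x. legendreF x = -1}"
    by (force simp: N_def)
  then have "card N = m"
    using card_nonsquares[OF assms] by (simp add: card_image inj_on_def m_def)
  define P where "P = (\<Prod>a\<in>N. [:-a, 1:])"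
  have "lead_coeff P = 1"
    unfolding P_def lead_coeff_prod by simp
  have "degree P = m"
    using \<open>card N = m\<close> by (simp add: P_def degree_prod_eq_sum_degree)
  have "degree ([:c, 1:] ^ m + 1) \<le> m"
    by (intro degree_add_le) (auto simp: degree_power_eq)
  moreover have "coeff ([:c, 1:] ^ m + 1) m = 1"
    using \<open>m > 0\<close> coeff_linear_poly_power[where i=m and n=m and a=c and b=1] by simp
  moreover have "poly ([:c, 1:] ^ m + 1) a = 0" if "a \<in> N" for a
    using that of_int_legendreF[OF assms, of "c + a", symmetric] by (simp add: N_def m_def)
  ultimately have "P = [:c, 1:] ^ m + 1"
    using \<open>card N = m\<close> \<open>degree P = m\<close> \<open>lead_coeff P = 1\<close>
    by (intro poly_eqI_degree_lead_coeff[where n=m and A=N]) (auto simp: P_def poly_prod)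
  then show ?thesis
    by (simp add: P_def N_def m_def)
qed

text \<open>Polynomial rings over an arbitrary field are not instances of the gcd type classes, so
  coprimality is expressed through Bezout identities.\<close>
definition comaximal :: "'a::comm_ring_1 \<Rightarrow> 'a \<Rightarrow> bool" where
  "comaximal a b \<longleftrightarrow> (\<exists>x y. x * a + y * b = 1)"

lemma comaximal_dvd_mult_left_iff:
  assumes "comaximal a c"
  shows "a dvd b * c \<longleftrightarrow> a dvd b"
proof
  assume "a dvd b * c"
  then obtain t where t: "b * c = a * t"
    by blast
  obtain x y where xy: "x * a + y * c = 1"
    using assms unfolding comaximal_def by blast
  have "b = b * (x * a + y * c)"
    by (simp add: xy)
  also have "\<dots> = a * (b * x) + y * (b * c)"
    by (simp add: algebra_simps)
  also have "\<dots> = a * (b * x + y * t)"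
    by (simp add: t algebra_simps)
  finally show "a dvd b" ..
qed simp

lemma comaximal_mult_right:
  assumes "comaximal a b" "comaximal a c"
  shows "comaximal a (b * c)"
proof -
  obtain x1 y1 x2 y2 where 1: "x1 * a + y1 * b = 1" and 2: "x2 * a + y2 * c = 1"
    using assms unfolding comaximal_def by blast
  have "(x1 * a + y1 * b) * (x2 * a + y2 * c) = 1"
    by (simp add: 1 2)
  then have "(x1 * x2 * a + x1 * y2 * c + y1 * b * x2) * a + (y1 * y2) * (b * c) = 1"
    by (simp add: algebra_simps)
  then show ?thesis
    unfolding comaximal_def by blast
qed

lemma comaximal_divisors:
  assumes "comaximal a b" "a' dvd a" "b' dvd b"
  shows "comaximal a' b'"
proof -
  obtain x y s t where "x * a + y * b = 1" "a = a' * s" "b = b' * t"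
    using assms unfolding comaximal_def by blast
  then have "(x * s) * a' + (y * t) * b' = 1"
    by (simp add: algebra_simps)
  then show ?thesis
    unfolding comaximal_def by blast
qed

lemma comaximal_power_plus_one:
  fixes w :: "'a::{comm_ring_1,algebraic_semidom}"
  assumes "is_unit (2::'a)" "m > 0"
  shows "comaximal (w ^ m + 1) (w ^ m - 1)" and "comaximal (w ^ m + 1) (w * (w ^ m - 1))"
proof -
  obtain h where "h * 2 = (1::'a)"
    using assms(1) by (metis dvdE mult.commute)
  moreover have "h * (w ^ m + 1) + (- h) * (w ^ m - 1) = h * 2"
    by (simp add: algebra_simps)
  ultimately show "comaximal (w ^ m + 1) (w ^ m - 1)"
    unfolding comaximal_def by metis
  moreover have "1 * (w ^ m + 1) + (- (w ^ (m - 1))) * w = 1"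
    using assms(2) by (cases m) (simp_all add: algebra_simps)
  then have "comaximal (w ^ m + 1) w"
    unfolding comaximal_def by blast
  ultimately show "comaximal (w ^ m + 1) (w * (w ^ m - 1))"
    by (simp add: comaximal_mult_right)
qed

lemma comaximal_linear_poly_if_not_root:
  fixes p :: "'a::field poly"
  assumes "poly p c \<noteq> 0"
  shows "comaximal p [:-c, 1:]"
proof -
  define u where "u = [:inverse (poly p c):]"
  have "u * p + (- u * synthetic_div p c) * [:-c, 1:] = u * (p - [:-c, 1:] * synthetic_div p c)"
    by (simp add: algebra_simps)
  also have "p - [:-c, 1:] * synthetic_div p c = [:poly p c:]"
    using synthetic_div_correct'[of c p] by (simp add: algebra_simps)
  also have "u * [:poly p c:] = 1"
    using assms by (simp add: u_def)
  finally show ?thesis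
    unfolding comaximal_def by blast
qed

lemma prod_linear_dvd_if_roots:
  fixes p :: "'a::field poly"
  assumes "finite S" "\<And>a. a \<in> S \<Longrightarrow> poly p a = 0"
  shows "(\<Prod>a\<in>S. [:-a, 1:]) dvd p"
  using assms
proof (induction S arbitrary: p rule: finite_induct)
  case (insert a S)
  then obtain r where r: "p = [:-a, 1:] * r"
    by (meson dvdE insertI1 poly_eq_0_iff_dvd)
  have "poly r b = 0" if "b \<in> S" for b
    using insert.prems[of b] that insert.hyps by (auto simp: r)
  then have "(\<Prod>b\<in>S. [:-b, 1:]) dvd r"
    by (rule insert.IH)
  then show ?case
    unfolding r prod.insert[OF insert.hyps] by (rule mult_dvd_mono[OF dvd_refl])
qed simp

lemma pcompose_dvd_pcompose: "p dvd r \<Longrightarrow> pcompose p s dvd pcompose r s"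
  by (auto simp: pcompose_mult)

lemma pcompose_power_left: "pcompose (p ^ n) s = pcompose p s ^ n"
  by (induction n) (simp_all add: pcompose_mult pcompose_1)

lemma sum_diff_identities:
  fixes \<alpha> \<beta> x z :: "'a::comm_ring_1"
  assumes \<alpha>: "\<alpha>^2 = (2 + z) * (2 + x)" and \<beta>: "\<beta>^2 = (2 - z) * (2 - x)"
  shows "(\<alpha> + \<beta>) * (\<alpha> - \<beta>) = 4 * (z + x)"
    and "(\<alpha> + \<beta>) * (4 * \<beta> + (2 - x) * (\<alpha> - \<beta>)) = 4 * (\<alpha> * \<beta> + (2 - x) * (2 + x))"
    and "(\<alpha> - \<beta>) * (4 * \<beta> - (2 - x) * (\<alpha> + \<beta>)) = 4 * (\<alpha> * \<beta> - (2 - x) * (2 + x))"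
proof -
  have "(\<alpha> + \<beta>) * (\<alpha> - \<beta>) = \<alpha>^2 - \<beta>^2"
    by (simp add: power2_eq_square algebra_simps)
  also have "\<dots> = 4 * (z + x)"
    unfolding \<alpha> \<beta> by (simp add: algebra_simps)
  finally show sq: "(\<alpha> + \<beta>) * (\<alpha> - \<beta>) = 4 * (z + x)" .
  have "(\<alpha> + \<beta>) * (4 * \<beta> + (2 - x) * (\<alpha> - \<beta>))
      = 4 * (\<alpha> * \<beta>) + 4 * \<beta>^2 + (2 - x) * ((\<alpha> + \<beta>) * (\<alpha> - \<beta>))"
    by (simp add: power2_eq_square algebra_simps)
  then show "(\<alpha> + \<beta>) * (4 * \<beta> + (2 - x) * (\<alpha> - \<beta>)) = 4 * (\<alpha> * \<beta> + (2 - x) * (2 + x))"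
    unfolding sq \<beta> by (simp add: algebra_simps)
  have "(\<alpha> - \<beta>) * (4 * \<beta> - (2 - x) * (\<alpha> + \<beta>))
      = 4 * (\<alpha> * \<beta>) - 4 * \<beta>^2 - (2 - x) * ((\<alpha> + \<beta>) * (\<alpha> - \<beta>))"
    by (simp add: power2_eq_square algebra_simps)
  then show "(\<alpha> - \<beta>) * (4 * \<beta> - (2 - x) * (\<alpha> + \<beta>)) = 4 * (\<alpha> * \<beta> - (2 - x) * (2 + x))"
    unfolding sq \<beta> by (simp add: algebra_simps)
qed

lemma lead_coeff_sum_linear_powers:
  fixes c :: "'a::comm_ring_1"
  assumes k: "2 * of_nat k = (1::'a)" and "c \<noteq> 0"
  shows "lead_coeff ([:c, 1:] ^ k + [:c, -1:] ^ k) = (if even k then 2 else c)"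
proof -
  define A where "A = [:c, 1:] ^ k + [:c, -1:] ^ k"
  define d where "d = (if even k then k else k - 1)"
  have "k > 0"
    using k by (cases k) auto
  have "degree ([:c, b:] ^ k) \<le> k" for b :: 'a
    by (rule order.trans[OF degree_power_le]) (simp add: degree_pCons_le)
  then have "coeff ([:c, b:] ^ k) i = 0" if "i > k" for b :: 'a and i
    using that by (intro coeff_eq_0) (meson le_less_trans)
  then have coeff_A: "coeff A i = (if i \<le> k then of_nat (k choose i) * c ^ (k - i) * (1 + (-1) ^ i) else 0)" for i
    by (auto simp: A_def coeff_linear_poly_power algebra_simps)
  have top: "coeff A d = (if even k then 2 else c)"
  proof (cases "even k")
    case False
    then have "coeff A d = c * (2 * of_nat k)"
      using \<open>k > 0\<close> binomial_symmetric[of "k - 1" k] by (simp add: coeff_A d_def algebra_simps)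
    with False show ?thesis
      by (simp add: k)
  qed (simp add: coeff_A d_def)
  moreover have "coeff A i = 0" if "i > d" for i
  proof (cases "i \<le> k")
    case True
    with that have "i = k" "odd k"
      by (auto simp: d_def split: if_splits)
    then show ?thesis
      by (simp add: coeff_A)
  qed (simp add: coeff_A)
  moreover have "(2::'a) \<noteq> 0"
    using k by (metis mult_zero_left zero_neq_one)
  ultimately have "degree A = d"
    using \<open>c \<noteq> 0\<close> by (intro order.antisym degree_le le_degree) auto
  with top show ?thesis
    by (simp add: A_def)
qed

lemma frobenius_sum_diff_powers:
  assumes q: "CARD('a::{field,finite}) = 2 * m + 1"
  defines "A \<equiv> [:2, 1:] ^ (m + 1) + [:2::'a, -1:] ^ (m + 1)"
    and "B \<equiv> [:2, 1:] ^ (m + 1) - [:2::'a, -1:] ^ (m + 1)"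
    and "W \<equiv> [:2, 1:] * [:2::'a, -1:]"
  shows "A * B = 4 * ([:0, 1:] * ([:0, 0, 1:] ^ m + 1))"
    and "A dvd W ^ m + 1"
    and "B dvd W * (W ^ m - 1)"
proof -
  define X :: "'a poly" where "X = [:0, 1:]"
  define \<alpha> where "\<alpha> = [:2::'a, 1:] ^ (m + 1)"
  define \<beta> where "\<beta> = [:2::'a, -1:] ^ (m + 1)"
  have lin: "[:2, 1:] = 2 + X" "[:2, -1:] = 2 - X"
    by (simp_all add: X_def numeral_poly)
  have sq: "(p ^ (m + 1))^2 = p ^ CARD('a) * p" for p :: "'a poly"
    unfolding q by (simp only: power_mult[symmetric] power_Suc2[symmetric]) (simp add: mult.commute)
  have frob: "[:2, 1:] ^ CARD('a) = 2 + X ^ CARD('a)" "[:2, -1:] ^ CARD('a) = 2 - X ^ CARD('a)"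
    using finite_field_linear_power_card[of "2::'a" 1] finite_field_linear_power_card[of "2::'a" "-1"]
    by (simp_all add: X_def monom_altdef numeral_poly)
  have \<alpha>2: "\<alpha>^2 = (2 + X ^ CARD('a)) * (2 + X)"
    unfolding \<alpha>_def sq frob by (simp only: lin)
  have \<beta>2: "\<beta>^2 = (2 - X ^ CARD('a)) * (2 - X)"
    unfolding \<beta>_def sq frob by (simp only: lin)
  have \<alpha>\<beta>: "\<alpha> * \<beta> = W * W ^ m"
    unfolding \<alpha>_def \<beta>_def W_def
    by (metis Suc_eq_plus1 power_Suc power_mult_distrib)
  have W: "(2 - X) * (2 + X) = W"
    by (simp add: W_def lin mult.commute)
  note identities = sum_diff_identities[OF \<alpha>2 \<beta>2, unfolded \<alpha>\<beta> W]
  have AB: "A = \<alpha> + \<beta>" "B = \<alpha> - \<beta>"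
    by (simp_all add: A_def B_def \<alpha>_def \<beta>_def)
  have "(2::'a) \<noteq> 0"
    using two_neq_zero_if_odd_card[where 'a='a] q by simp
  then have "(4::'a) \<noteq> 0"
    by (metis mult_2 mult_eq_0_iff numeral_Bit0)
  then have "is_unit (4 :: 'a poly)"
    by (simp add: numeral_poly is_unit_poly_iff dvd_field_iff)
  show "A * B = 4 * ([:0, 1:] * ([:0, 0, 1:] ^ m + 1))"
  proof -
    have "[:0, 0, 1:] = X^2"
      by (simp add: X_def power2_eq_square)
    moreover have "X ^ CARD('a) + X = X * ((X^2) ^ m + 1)"
      unfolding q power_mult[symmetric] by (simp add: distrib_left)
    ultimately have "X ^ CARD('a) + X = X * ([:0, 0, 1:] ^ m + 1)"
      by simp
    then show ?thesis
      using identities(1) by (simp add: AB X_def)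
  qed
  have "comaximal A [:-c, 1:]" if "c = 2 \<or> c = -2" for c
    using that \<open>(4::'a) \<noteq> 0\<close>
    by (intro comaximal_linear_poly_if_not_root) (auto simp: A_def)
  moreover have "[:2, -1:] dvd [:-2::'a, 1:]"
    by (rule dvdI[of _ _ "-1"]) simp
  ultimately have "comaximal A [:2, 1:]" "comaximal A [:2, -1:]"
    using comaximal_divisors[OF _ dvd_refl] by force+
  then have "comaximal A W"
    unfolding W_def by (rule comaximal_mult_right)
  moreover have "A dvd W * (W ^ m + 1)"
    using identities(2) \<open>is_unit 4\<close> by (metis AB(1) distrib_left dvd_mult_unit_iff' dvd_triv_left mult_1_right)
  ultimately show "A dvd W ^ m + 1"
    by (simp add: comaximal_dvd_mult_left_iff mult.commute[of W])
  show "B dvd W * (W ^ m - 1)"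
    using identities(3) \<open>is_unit 4\<close> by (metis AB(2) right_diff_distrib dvd_mult_unit_iff' dvd_triv_left mult_1_right)
qed

lemma prod_B2_linear_factors:
  assumes q: "CARD('a::{field,finite}) = 2 * m + 1"
  shows "(\<Prod>a\<in>B2 (-1) (-1). [:-a, 1:]) * (\<Prod>a\<in>B2 1 (-1). [:-a, 1:]) = [:2::'a, 1:] ^ m + 1"
    and "(\<Prod>a\<in>B2 (-1) (-1). [:-a, 1:]) dvd [:2::'a, -1:] ^ m + 1"
    and "(\<Prod>a\<in>B2 1 (-1). [:-a, 1:]) dvd [:2::'a, -1:] ^ m - 1"
proof -
  have odd: "odd CARD('a)"
    using q by simp
  have "legendreF (4::'a) = 1"
    using legendreF_square[of "2::'a"] two_neq_zero_if_odd_card[OF odd] by simp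
  then have "legendreF (2 - a) \<noteq> 0" if "legendreF (2 + a) = -1" for a :: 'a
    using that by (cases "a = 2") (auto simp: legendreF_def[of "2 - a"])
  then have "{a. legendreF (2 + a) = -1} = B2 (-1) (-1) \<union> (B2 1 (-1) :: 'a set)"
    using legendreF_cases by (fastforce simp: B2_def)
  moreover have "B2 (-1) (-1) \<inter> (B2 1 (-1) :: 'a set) = {}"
    by (auto simp: B2_def)
  ultimately show "(\<Prod>a\<in>B2 (-1) (-1). [:-a, 1:]) * (\<Prod>a\<in>B2 1 (-1). [:-a, 1:]) = [:2::'a, 1:] ^ m + 1"
    using prod_linear_shifted_nonsquares[OF odd, of 2] by (simp add: q prod.union_disjoint)
  have root: "(2 - a) ^ m = of_int e" if "a \<in> B2 e e'" for a :: 'a and e e'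
    using that of_int_legendreF[OF odd, of "2 - a"] by (simp add: B2_def q)
  show "(\<Prod>a\<in>B2 (-1) (-1). [:-a, 1:]) dvd [:2::'a, -1:] ^ m + 1"
    by (rule prod_linear_dvd_if_roots) (auto dest: root)
  show "(\<Prod>a\<in>B2 1 (-1). [:-a, 1:]) dvd [:2::'a, -1:] ^ m - 1"
    by (rule prod_linear_dvd_if_roots) (auto dest: root)
qed

lemma smult_lead_coeff_eq_if_associated:
  fixes p q :: "'a::field poly"
  assumes "p dvd q" "q dvd p"
  shows "smult (lead_coeff p) q = smult (lead_coeff q) p"
proof (cases "p = 0")
  case False
  obtain r t where r: "q = p * r" and t: "p = q * t"
    using assms by blast
  then have "p * (r * t) = p * 1"
    by (metis mult.assoc mult_1_right)
  then have "is_unit r"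
    using False by (metis dvdI mult_left_cancel)
  then obtain c where "r = [:c:]"
    by (auto simp: is_unit_poly_iff)
  then show ?thesis
    by (simp add: r lead_coeff_mult mult.commute)
qed (use assms in simp)

lemma prod_B2_quadratic_factors:
  assumes q: "CARD('a::{field,finite}) = 2 * m + 1"
  defines "W \<equiv> [:2, 1:] * [:2::'a, -1:]"
  shows "(\<Prod>a\<in>B2 (-1) (-1). [:-2 - a, 0, 1:]) * (\<Prod>a\<in>B2 1 (-1). [:-2 - a, 0, 1:])
      = [:0, 0, 1::'a:] ^ m + 1"
    and "(\<Prod>a\<in>B2 (-1) (-1). [:-2 - a, 0, 1:]) dvd W ^ m + 1"
    and "(\<Prod>a\<in>B2 1 (-1). [:-2 - a, 0, 1:]) dvd W ^ m - 1"
proof -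
  define Y :: "'a poly" where "Y = [:-2, 0, 1:]"
  have comp: "pcompose [:-a, 1:] Y = [:-2 - a, 0, 1:]" "pcompose [:2, 1:] Y = [:0, 0, 1:]"
      "pcompose [:2, -1:] Y = W" for a :: 'a
    by (simp_all add: Y_def W_def pcompose_pCons)
  show "(\<Prod>a\<in>B2 (-1) (-1). [:-2 - a, 0, 1:]) * (\<Prod>a\<in>B2 1 (-1). [:-2 - a, 0, 1:])
      = [:0, 0, 1::'a:] ^ m + 1"
    using arg_cong[OF prod_B2_linear_factors(1)[OF q], of "\<lambda>p. pcompose p Y"]
    by (simp add: comp pcompose_prod pcompose_mult pcompose_add pcompose_power_left pcompose_1)
  show "(\<Prod>a\<in>B2 (-1) (-1). [:-2 - a, 0, 1:]) dvd W ^ m + 1"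
    using pcompose_dvd_pcompose[OF prod_B2_linear_factors(2)[OF q], of Y]
    by (simp add: comp pcompose_prod pcompose_add pcompose_power_left pcompose_1)
  show "(\<Prod>a\<in>B2 1 (-1). [:-2 - a, 0, 1:]) dvd W ^ m - 1"
    using pcompose_dvd_pcompose[OF prod_B2_linear_factors(3)[OF q], of Y]
    by (simp add: comp pcompose_prod pcompose_diff pcompose_power_left pcompose_1)
qed

lemma smult_two_prod_B2_minus_minus:
  assumes q: "CARD('a::{field,finite}) = 2 * m + 1"
  shows "smult 2 (\<Prod>a\<in>B2 (-1) (-1). [:-2 - a, 0, 1:]) = [:2::'a, 1:] ^ (m + 1) + [:2, -1:] ^ (m + 1)"
proof -
  define W :: "'a poly" where "W = [:2, 1:] * [:2, -1:]"
  define X :: "'a poly" where "X = [:0, 1:]"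
  define A :: "'a poly" where "A = [:2, 1:] ^ (m + 1) + [:2, -1:] ^ (m + 1)"
  define B :: "'a poly" where "B = [:2, 1:] ^ (m + 1) - [:2, -1:] ^ (m + 1)"
  define D :: "'a poly" where "D = (\<Prod>a\<in>B2 (-1) (-1). [:-2 - a, 0, 1:])"
  define E :: "'a poly" where "E = (\<Prod>a\<in>B2 1 (-1). [:-2 - a, 0, 1:])"
  note DE = prod_B2_quadratic_factors[OF q, folded W_def D_def E_def]
  note AB = frobenius_sum_diff_powers[OF q, unfolded DE(1)[symmetric], folded W_def X_def A_def B_def]
  have "(2::'a) \<noteq> 0"
    using two_neq_zero_if_odd_card[where 'a='a] q by simp
  then have "(4::'a) \<noteq> 0"
    by (metis mult_2 mult_eq_0_iff numeral_Bit0)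
  then have "is_unit (4::'a poly)" "is_unit (2::'a poly)"
    using \<open>(2::'a) \<noteq> 0\<close> by (simp_all add: numeral_poly is_unit_poly_iff dvd_field_iff)
  moreover have "m > 0"
    using q card_finite_field_ge_two[where 'a='a] by simp
  ultimately have W_cop: "comaximal (W ^ m + 1) (W ^ m - 1)" "comaximal (W ^ m + 1) (W * (W ^ m - 1))"
    using comaximal_power_plus_one by blast+
  have "comaximal D B"
    using comaximal_divisors[OF W_cop(2) DE(2) AB(3)] .
  moreover have "D dvd A * B"
    unfolding AB(1) by (simp add: dvd_mult)
  ultimately have "D dvd A"
    using comaximal_dvd_mult_left_iff[of D B A] by (simp add: mult.commute)
  have "comaximal A X" "comaximal A E"
    using comaximal_linear_poly_if_not_root[of A 0] \<open>(4::'a) \<noteq> 0\<close> \<open>(2::'a) \<noteq> 0\<close>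
      comaximal_divisors[OF W_cop(1) AB(2) DE(3)]
    by (simp_all add: A_def X_def)
  moreover have "A dvd 4 * (X * (D * E))"
    unfolding AB(1)[symmetric] by simp
  then have "A dvd (D * E) * X"
    by (simp add: dvd_mult_unit_iff'[OF \<open>is_unit 4\<close>] mult.commute)
  ultimately have "A dvd D"
    by (simp add: comaximal_dvd_mult_left_iff)
  moreover have "2 * of_nat (m + 1) = (of_nat CARD('a) + 1 :: 'a)"
    by (simp add: q algebra_simps)
  then have "lead_coeff A = 2"
    using lead_coeff_sum_linear_powers[of "m + 1" 2] \<open>(2::'a) \<noteq> 0\<close>
    by (simp add: A_def of_nat_card_finite_field)
  moreover have "lead_coeff D = 1"
    by (simp add: D_def lead_coeff_prod)
  ultimately show ?thesis
    using smult_lead_coeff_eq_if_associated[of A D] \<open>D dvd A\<close> by (simp add: A_def D_def)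
qed

lemma prod_B2_minus_minus_eq:
  assumes odd: "odd CARD('a::{field,finite})" and s: "s^2 = c + 2"
  shows "2 * (\<Prod>a\<in>B2 (-1) (-1). c - a)
    = (2 + s) * of_int (legendreF (2 + s)) + (2 - s) * of_int (legendreF (2 - (s::'a)))"
proof -
  define m where "m = (CARD('a) - 1) div 2"
  have q: "CARD('a) = 2 * m + 1"
    using odd by (simp add: m_def)
  have "2 * (\<Prod>a\<in>B2 (-1) (-1). c - a) = poly (smult 2 (\<Prod>a\<in>B2 (-1) (-1). [:-2 - a, 0, 1:])) s"
    using s by (simp add: poly_prod power2_eq_square algebra_simps)
  also have "\<dots> = (2 + s) * (2 + s) ^ m + (2 - s) * (2 - s) ^ m"
    unfolding smult_two_prod_B2_minus_minus[OF q] by (simp add: algebra_simps)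
  finally show ?thesis
    by (simp add: of_int_legendreF[OF odd] m_def)
qed

lemma legendreF_two_plus_times_two_minus:
  assumes "odd CARD('a::{field,finite})"
  shows "legendreF (2 + s) * legendreF (2 - s) = legendreF (4 - (s::'a)^2)"
  by (simp add: legendreF_mult[OF assms, symmetric] power2_eq_square algebra_simps)

lemma exists_sqrt_with_legendreF_plus_two:
  assumes "(y::'a::{field,finite})^2 = d"
    and "legendreF (2 + y) * legendreF (2 - y) = -1" and "e = 1 \<or> e = -1"
  shows "\<exists>s. s^2 = d \<and> legendreF (s + 2) = e"
proof -
  have "legendreF (y + 2) = e \<or> legendreF (-y + 2) = e"
    using assms(2,3) legendreF_cases[of "2 + y"] legendreF_cases[of "2 - y"] by (auto simp: add.commute)
  then show ?thesis
    using assms(1) by (metis power2_minus)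
qed

lemma prod_B2_minus_minus_at_two:
  assumes odd: "odd CARD('a::{field,finite})"
  shows "(\<Prod>a\<in>B2 (-1) (-1). 2 - a) = (2::'a)"
proof -
  have "legendreF (4::'a) = 1"
    using legendreF_square[of "2::'a"] two_neq_zero_if_odd_card[OF odd] by simp
  then have "2 * (\<Prod>a\<in>B2 (-1) (-1). 2 - a) = 2 * (2::'a)"
    using prod_B2_minus_minus_eq[OF odd, of 2 2] by simp
  then show ?thesis
    using mult_left_cancel[OF two_neq_zero_if_odd_card[OF odd]] by blast
qed

lemma prod_B2_minus_minus_at_minus_two:
  assumes odd: "odd CARD('a::{field,finite})"
  shows "(\<Prod>a\<in>B2 (-1) (-1). -2 - a) = of_int (legendreF (2::'a)) * (2::'a)"
proof -
  have "2 * (\<Prod>a\<in>B2 (-1) (-1). -2 - a) = 2 * (of_int (legendreF (2::'a)) * (2::'a))"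
    using prod_B2_minus_minus_eq[OF odd, of 0 "-2"] by simp
  then show ?thesis
    using mult_left_cancel[OF two_neq_zero_if_odd_card[OF odd]] by blast
qed

lemma prod_B2_minus_minus_uminus:
  fixes c :: "'a::{field,finite}"
  assumes odd: "odd CARD('a)"
  shows "(\<Prod>a\<in>B2 (-1) (-1). -c - a) = of_int (legendreF (2::'a)) * (\<Prod>a\<in>B2 (-1) (-1). c - a)"
proof -
  define B :: "'a set" where "B = B2 (-1) (-1)"
  have reflect: "(\<Prod>a\<in>B. -c - a) = (-1) ^ card B * (\<Prod>a\<in>B. c - a)" for c
  proof -
    have "(\<Prod>a\<in>B. -c - a) = (\<Prod>a\<in>B. (-1) * (c - a))"
      by (rule prod.reindex_bij_witness[where i = uminus and j = uminus])
         (auto simp: B_def B2_def algebra_simps)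
    then show ?thesis
      by (simp only: prod.distrib prod_constant)
  qed
  txt \<open>The sign \<open>(-1) ^ card B\<close> is read off from the values at \<open>2\<close> and \<open>-2\<close>.\<close>
  have "(-1) ^ card B * 2 = of_int (legendreF (2::'a)) * (2::'a)"
    using reflect[of 2] prod_B2_minus_minus_at_two[OF odd] prod_B2_minus_minus_at_minus_two[OF odd]
    by (simp only: B_def)
  then have "(-1) ^ card B = (of_int (legendreF (2::'a)) :: 'a)"
    using mult_right_cancel[OF two_neq_zero_if_odd_card[OF odd]] by blast
  then show ?thesis
    using reflect[of c] by (simp add: B_def)
qed

lemma prod_B2_minus_minus_on_B2_minus_plus:
  fixes c :: "'a::{field,finite}"
  assumes odd: "odd CARD('a)" and c: "c \<in> B2 (-1) 1"
  shows "(\<exists>s. s^2 = c + 2 \<and> legendreF (s + 2) = 1)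
    \<and> (\<forall>s. s^2 = c + 2 \<and> legendreF (s + 2) = 1 \<longrightarrow> (\<Prod>a\<in>B2 (-1) (-1). c - a) = s)"
proof -
  have pair: "legendreF (2 + s) * legendreF (2 - s) = -1" if "s^2 = c + 2" for s
    using legendreF_two_plus_times_two_minus[OF odd, of s] that c by (simp add: B2_def)
  obtain y where "y^2 = c + 2"
    using exists_sqrt_if_legendreF_eq_1[of "c + 2"] c by (auto simp: B2_def add.commute)
  then have "\<exists>s. s^2 = c + 2 \<and> legendreF (s + 2) = 1"
    using exists_sqrt_with_legendreF_plus_two[OF _ pair] by blast
  moreover have "(\<Prod>a\<in>B2 (-1) (-1). c - a) = s" if "s^2 = c + 2" "legendreF (s + 2) = 1" for s
  proof -
    have "legendreF (2 - s) = -1"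
      using pair[OF that(1)] that(2) by (simp add: add.commute)
    then have "2 * (\<Prod>a\<in>B2 (-1) (-1). c - a) = 2 * s"
      using prod_B2_minus_minus_eq[OF odd that(1)] that(2) by (simp add: add.commute algebra_simps)
    then show ?thesis
      using mult_left_cancel[OF two_neq_zero_if_odd_card[OF odd]] by blast
  qed
  ultimately show ?thesis
    by blast
qed

lemma prod_B2_minus_minus_on_B2_plus_minus:
  fixes c :: "'a::{field,finite}"
  assumes odd: "odd CARD('a)" and c: "c \<in> B2 1 (-1)"
  shows "(\<exists>s. s^2 = 2 - c \<and> legendreF (s + 2) = -1)
    \<and> (\<forall>s. s^2 = 2 - c \<and> legendreF (s + 2) = -1 \<longrightarrow>
          (\<Prod>a\<in>B2 (-1) (-1). c - a) = - (of_int (legendreF (2::'a)) * s))"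
proof -
  have pair: "legendreF (2 + s) * legendreF (2 - s) = -1" if "s^2 = 2 - c" for s
    using legendreF_two_plus_times_two_minus[OF odd, of s] that c by (simp add: B2_def)
  obtain y where "y^2 = 2 - c"
    using exists_sqrt_if_legendreF_eq_1[of "2 - c"] c by (auto simp: B2_def)
  then have "\<exists>s. s^2 = 2 - c \<and> legendreF (s + 2) = -1"
    using exists_sqrt_with_legendreF_plus_two[OF _ pair] by blast
  moreover have "(\<Prod>a\<in>B2 (-1) (-1). c - a) = - (of_int (legendreF (2::'a)) * s)"
    if "s^2 = 2 - c" "legendreF (s + 2) = -1" for s
  proof -
    have "legendreF (2 - s) = 1"
      using pair[OF that(1)] that(2) by (simp add: add.commute)
    moreover have "s^2 = -c + 2"
      using that(1) by simp
    ultimately have "2 * (\<Prod>a\<in>B2 (-1) (-1). -c - a) = 2 * -s"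
      using prod_B2_minus_minus_eq[OF odd, of s "-c"] that(2) by (simp add: add.commute algebra_simps)
    then have P_neg: "(\<Prod>a\<in>B2 (-1) (-1). -c - a) = -s"
      using mult_left_cancel[OF two_neq_zero_if_odd_card[OF odd]] by blast
    have "legendreF (2::'a) * legendreF (2::'a) = 1"
      using legendreF_mult[OF odd, of 2 2] legendreF_square[of "2::'a"] two_neq_zero_if_odd_card[OF odd]
      by (simp add: power2_eq_square)
    then have l2: "of_int (legendreF (2::'a)) * of_int (legendreF (2::'a)) = (1::'a)"
      by (simp flip: of_int_mult)
    have "(\<Prod>a\<in>B2 (-1) (-1). c - a)
        = of_int (legendreF (2::'a)) * (of_int (legendreF (2::'a)) * (\<Prod>a\<in>B2 (-1) (-1). c - a))"
      using l2 by (simp add: mult.assoc[symmetric])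
    also have "\<dots> = - (of_int (legendreF (2::'a)) * s)"
      unfolding prod_B2_minus_minus_uminus[OF odd, of c, symmetric] P_neg by simp
    finally show ?thesis .
  qed
  ultimately show ?thesis
    by blast
qed

lemma uminus_in_B2_iff: "- b \<in> B2 e1 e2 \<longleftrightarrow> b \<in> B2 e2 e1"
  by (auto simp: B2_def algebra_simps)

lemma sqrt_of_B2_plus_plus:
  fixes c :: "'a::{field,finite}"
  assumes odd: "odd CARD('a)" and c: "c \<in> B2 1 1"
  shows "(\<exists>s. s^2 = c + 2)
    \<and> (\<forall>s. s^2 = c + 2 \<longrightarrow> (s \<in> B2 1 1 \<and> - s \<in> B2 1 1) \<or> (s \<in> B2 (-1) (-1) \<and> - s \<in> B2 (-1) (-1)))"
proof -
  have "s \<in> B2 1 1 \<or> s \<in> B2 (-1) (-1)" if "s^2 = c + 2" for s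
  proof -
    have "legendreF (2 + s) * legendreF (2 - s) = 1"
      using legendreF_two_plus_times_two_minus[OF odd, of s] that c by (simp add: B2_def)
    then show ?thesis
      using legendreF_cases[of "2 + s"] legendreF_cases[of "2 - s"] by (auto simp: B2_def)
  qed
  moreover have "\<exists>s. s^2 = c + 2"
    using exists_sqrt_if_legendreF_eq_1[of "c + 2"] c by (auto simp: B2_def add.commute)
  ultimately show ?thesis
    by (auto simp: uminus_in_B2_iff)
qed

lemma prod_B2_minus_minus_on_B2_plus_plus:
  fixes c :: "'a::{field,finite}"
  assumes odd: "odd CARD('a)" and c: "c \<in> B2 1 1" and s: "s^2 = c + 2"
  shows "(s \<in> B2 1 1 \<longrightarrow> (\<Prod>a\<in>B2 (-1) (-1). c - a) = 2)
    \<and> (s \<notin> B2 1 1 \<longrightarrow> (\<Prod>a\<in>B2 (-1) (-1). c - a) = -2)"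
proof -
  note cancel = mult_left_cancel[OF two_neq_zero_if_odd_card[OF odd]]
  consider "s \<in> B2 1 1" | "s \<in> B2 (-1) (-1)"
    using sqrt_of_B2_plus_plus[OF odd c] s by blast
  then show ?thesis
  proof cases
    case 1
    then have "2 * (\<Prod>a\<in>B2 (-1) (-1). c - a) = 2 * 2"
      using prod_B2_minus_minus_eq[OF odd s] by (simp add: B2_def)
    with 1 show ?thesis
      using cancel by blast
  next
    case 2
    then have "2 * (\<Prod>a\<in>B2 (-1) (-1). c - a) = 2 * -2" "s \<notin> B2 1 1"
      using prod_B2_minus_minus_eq[OF odd s] by (auto simp: B2_def)
    then show ?thesis
      using cancel by blast
  qed
qed

lemma prod_B2_minus_minus_on_B2_minus_minus:
  "c \<in> B2 (-1) (-1) \<Longrightarrow> (\<Prod>a\<in>B2 (-1) (-1). c - a) = (0::'a::{field,finite})"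
  by (auto intro: prod_zero)

theorem theorem7p2:
  fixes c :: "'a::{field,finite}"
  assumes "odd (card (UNIV :: 'a set))"
  defines "P \<equiv> (\<Prod>a\<in>(B2 (-1) (-1) :: 'a set). c - a)"
  shows "(c = 2 \<longrightarrow> P = 2)
    \<and> (c = -2 \<longrightarrow> P = of_int (legendreF (2::'a)) * 2)
    \<and> (c \<in> B2 (-1) 1 \<longrightarrow>
          (\<exists>s. s ^ 2 = c + 2 \<and> legendreF (s + 2) = 1) \<and>
          (\<forall>s. s ^ 2 = c + 2 \<and> legendreF (s + 2) = 1 \<longrightarrow> P = s))
    \<and> (c \<in> B2 1 (-1) \<longrightarrow>
          (\<exists>s. s ^ 2 = 2 - c \<and> legendreF (s + 2) = -1) \<and>
          (\<forall>s. s ^ 2 = 2 - c \<and> legendreF (s + 2) = -1 \<longrightarrow>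
                P = - (of_int (legendreF (2::'a)) * s)))
    \<and> (c \<in> B2 1 1 \<longrightarrow> (\<forall>s. s ^ 2 = c + 2 \<longrightarrow>
          (s \<in> B2 1 1 \<longrightarrow> P = 2) \<and> (s \<notin> B2 1 1 \<longrightarrow> P = -2)))
    \<and> (c \<in> B2 (-1) (-1) \<longrightarrow> P = 0)
    \<and> (c \<in> B2 1 1 \<longrightarrow> (\<exists>s. s ^ 2 = c + 2) \<and>
          (\<forall>s. s ^ 2 = c + 2 \<longrightarrow>
             (s \<in> B2 1 1 \<and> - s \<in> B2 1 1) \<or> (s \<in> B2 (-1) (-1) \<and> - s \<in> B2 (-1) (-1))))"
  using prod_B2_minus_minus_at_two[OF assms(1)] prod_B2_minus_minus_at_minus_two[OF assms(1)]
    prod_B2_minus_minus_on_B2_minus_plus[OF assms(1)] prod_B2_minus_minus_on_B2_plus_minus[OF assms(1)]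
    prod_B2_minus_minus_on_B2_plus_plus[OF assms(1)] prod_B2_minus_minus_on_B2_minus_minus
    sqrt_of_B2_plus_plus[OF assms(1)]
  unfolding P_def by blast

end
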